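(* Consider the problem and algorithm AC2CD described in the context, let $\{x^k\}$ be a sequence produced by AC2CD, and assume $\lim_{k\to\infty}x^k=x^*$. Let $\mathcal A(x^* )=\{i:x^*_i=l_i\}\cup\{i:x^*_i=u_i\}$ and $D^*_{\min}=\min_{i\notin\mathcal A(x^* )}D_i(x^* )$ (which is well defined and positive), and let $k_N$ be the first outer iteration such that $\|x^k-x^*\|_\infty<D^*_{\min}$ for all $k>k_N$. Then for all $k>k_N$, \[ l_h<x^k_h<u_h\quad\text{for all } h\notin\mathcal A(x^* ). \]
   Context: Problem: minimize $f(x)$ subject to $e^T x = b$ and $l_i \le x_i \le u_i$ ($i=1,\dots,n$), where $n\ge 2$, $e$ is the all-ones vector, $b\in\mathbb{R}$, $l_i\in\mathbb{R}\cup\{-\infty\}$, $u_i\in\mathbb{R}\cup\{+\infty\}$, $l_i<u_i$, and $f:\mathbb{R}^n\to\mathbb{R}$ is continuously differentiable with $\nabla f$ Lipschitz continuous on $\mathbb{R}^n$. $\mathcal F$ is the feasible set, $e_i$ the $i$th unit vector. For $x\in\mathcal F$, $D_h(x)=\min\{x_h-l_h,u_h-x_h\}$. Algorithm AC2CD with parameters $\tau\in(0,1]$, $\gamma,\delta\in(0,1)$, $0<A_l\le A_u<\infty$ and starting point $x^0\in\mathcal F$: for $k=0,1,2,\dots$: let $D^k=\max_h D_h(x^k)$; choose $j(k)$ with $D_{j(k)}(x^k)\ge\tau D^k$; choose a permutation $(p^k_1,\dots,p^k_n)$ of $\{1,\dots,n\}$; set $z^{k,1}=x^k$; for $i=1,\dots,n$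 (inner iteration $(k,i)$): $g^{k,i}=\nabla_{j(k)}f(z^{k,i})-\nabla_{p^k_i}f(z^{k,i})$, $d^{k,i}=g^{k,i}(e_{p^k_i}-e_{j(k)})$; $\bar\alpha^{k,i}=\min\{u_{p^k_i}-z^{k,i}_{p^k_i},z^{k,i}_{j(k)}-l_{j(k)}\}/g^{k,i}$ if $g^{k,i}>0$, $=\min\{z^{k,i}_{p^k_i}-l_{p^k_i},u_{j(k)}-z^{k,i}_{j(k)}\}/|g^{k,i}|$ if $g^{k,i}<0$, $=0$ if $g^{k,i}=0$; choose $A^{k,i}\in[A_l,A_u]$, set $\Delta^{k,i}=\min\{\bar\alpha^{k,i},A^{k,i}\}$; starting from $\alpha=\Delta^{k,i}$, while $f(z^{k,i}+\alpha d^{k,i})>f(z^{k,i})+\gamma\alpha\nabla f(z^{k,i})^Td^{k,i}$ replace $\alpha$ by $\delta\alpha$; $\alpha^{k,i}$ is the final $\alpha$ and $z^{k,i+1}=z^{k,i}+\alpha^{k,i}d^{k,i}$. Then $x^{k+1}=z^{k,n+1}$. Standing assumptions: $\mathcal L_0=\{x\in\mathcal F: f(x)\le f(x^0)\}$ is nonempty and compact, and every $x\in\mathcal L_0$ has some index $i$ with $l_i<x_i<u_i$. *)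

theory Defs
  imports "HOL-Analysis.Analysis"
begin

text \<open>Coordinates are indexed by a finite type 'n (n = CARD('n)); lower bounds
  l i \<in> \<real> \<union> {-\<infinity>}, upper bounds u i \<in> \<real> \<union> {+\<infinity>} are extended reals.\<close>

definition feasible :: "('n::finite \<Rightarrow> ereal) \<Rightarrow> ('n \<Rightarrow> ereal) \<Rightarrow> real \<Rightarrow> real^'n \<Rightarrow> bool" where
  "feasible l u b x \<longleftrightarrow> (\<Sum>i\<in>UNIV. x $ i) = b \<and> (\<forall>i. l i \<le> ereal (x $ i) \<and> ereal (x $ i) \<le> u i)"

definition Dist :: "('n::finite \<Rightarrow> ereal) \<Rightarrow> ('n \<Rightarrow> ereal) \<Rightarrow> real^'n \<Rightarrow> 'n \<Rightarrow> ereal" where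
  "Dist l u x h = min (ereal (x $ h) - l h) (u h - ereal (x $ h))"

definition linf :: "real^'n::finite \<Rightarrow> real" where
  "linf x = (MAX i\<in>UNIV. \<bar>x $ i\<bar>)"

text \<open>Maximal feasible step \<open>\<bar>\<alpha>\<close> along d = g (e_p - e_j).\<close>
definition alpha_bar :: "('n::finite \<Rightarrow> ereal) \<Rightarrow> ('n \<Rightarrow> ereal) \<Rightarrow> real^'n \<Rightarrow> 'n \<Rightarrow> 'n \<Rightarrow> real \<Rightarrow> ereal" where
  "alpha_bar l u z j p g =
     (if g > 0 then min (u p - ereal (z $ p)) (ereal (z $ j) - l j) / ereal g
      else if g < 0 then min (ereal (z $ p) - l p) (u j - ereal (z $ j)) / ereal \<bar>g\<bar>
      else 0)"

text \<open>One inner iteration (k,i) of AC2CD: from z to z', with pivot index j = j(k)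
  and p = p^k_i; G is the gradient of f.\<close>
definition inner_step ::
  "(real^'n::finite \<Rightarrow> real) \<Rightarrow> (real^'n \<Rightarrow> real^'n) \<Rightarrow> ('n \<Rightarrow> ereal) \<Rightarrow> ('n \<Rightarrow> ereal) \<Rightarrow>
   real \<Rightarrow> real \<Rightarrow> real \<Rightarrow> real \<Rightarrow> 'n \<Rightarrow> 'n \<Rightarrow> real^'n \<Rightarrow> real^'n \<Rightarrow> bool" where
  "inner_step f G l u \<gamma> \<delta> A_l A_u j p z z' \<longleftrightarrow>
     (let g = G z $ j - G z $ p;
          d = g *\<^sub>R (axis p 1 - axis j 1);
          armijo = (\<lambda>\<alpha>. f (z + \<alpha> *\<^sub>R d) \<le> f z + \<gamma> * \<alpha> * (G z \<bullet> d))
      in \<exists>A \<Delta> m. A_l \<le> A \<and> A \<le> A_u \<and>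
           \<Delta> = real_of_ereal (min (alpha_bar l u z j p g) (ereal A)) \<and>
           armijo (\<delta> ^ m * \<Delta>) \<and> (\<forall>m'<m. \<not> armijo (\<delta> ^ m' * \<Delta>)) \<and>
           z' = z + (\<delta> ^ m * \<Delta>) *\<^sub>R d)"

definition AC2CD_seq ::
  "(real^'n::finite \<Rightarrow> real) \<Rightarrow> (real^'n \<Rightarrow> real^'n) \<Rightarrow> ('n \<Rightarrow> ereal) \<Rightarrow> ('n \<Rightarrow> ereal) \<Rightarrow>
   real \<Rightarrow> real \<Rightarrow> real \<Rightarrow> real \<Rightarrow> real \<Rightarrow> (nat \<Rightarrow> real^'n) \<Rightarrow> bool" where
  "AC2CD_seq f G l u \<tau> \<gamma> \<delta> A_l A_u x \<longleftrightarrow>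
     (\<forall>k. \<exists>j p z.
        Dist l u (x k) j \<ge> ereal \<tau> * (MAX h\<in>UNIV. Dist l u (x k) h) \<and>
        bij_betw p {1..CARD('n)} (UNIV :: 'n set) \<and>
        z 1 = x k \<and> z (CARD('n) + 1) = x (Suc k) \<and>
        (\<forall>i\<in>{1..CARD('n)}. inner_step f G l u \<gamma> \<delta> A_l A_u j (p i) (z i) (z (Suc i))))"

end

theory Submission imports Defs begin

text \<open>Every inner step of AC2CD moves mass between two coordinates by at most the maximal
  feasible step \<open>alpha_bar\<close>, so all iterates stay in the box and, the box being closed, so
  does the limit \<open>x\<^sup>*\<close>. A coordinate \<open>h\<close> that is free at \<open>x\<^sup>*\<close> has distance
  \<open>D\<^sub>h(x\<^sup>*) \<ge> D\<^sup>*\<^sub>m\<^sub>i\<^sub>n > 0\<close> to its bounds, so any \<open>x\<^sup>k\<close> with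
  \<open>\<parallel>x\<^sup>k - x\<^sup>*\<parallel>\<^sub>\<infinity> < D\<^sup>*\<^sub>m\<^sub>i\<^sub>n\<close> keeps that coordinate strictly inside its bounds.\<close>

definition in_box :: "('n::finite \<Rightarrow> ereal) \<Rightarrow> ('n \<Rightarrow> ereal) \<Rightarrow> real^'n \<Rightarrow> bool" where
  "in_box l u z \<longleftrightarrow> (\<forall>i. l i \<le> ereal (z $ i) \<and> ereal (z $ i) \<le> u i)"

lemma feasible_imp_in_box: "feasible l u b x \<Longrightarrow> in_box l u x"
  by (simp add: feasible_def in_box_def)

lemma ereal_add_le_if_le_diff: "ereal c \<le> u - ereal z \<Longrightarrow> ereal (z + c) \<le> u"
  by (cases u) auto

lemma ereal_le_diff_if_le_diff: "ereal c \<le> ereal z - l \<Longrightarrow> l \<le> ereal (z - c)"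
  by (cases l) auto

lemma ereal_mult_le_if_le_divide:
  fixes a :: ereal and g t :: real
  assumes "0 < g" "0 \<le> a" "ereal t \<le> a / ereal g"
  shows "ereal (t * g) \<le> a"
proof (cases a)
  case (real r)
  then show ?thesis using assms by (simp add: field_simps)
qed (use assms in auto)

lemma in_box_transfer:
  fixes z :: "real^'n::finite"
  assumes z: "in_box l u z" and c: "0 \<le> c"
    and up: "ereal c \<le> u p - ereal (z $ p)" and lo: "ereal c \<le> ereal (z $ j) - l j"
  shows "in_box l u (z + c *\<^sub>R (axis p 1 - axis j 1))"
proof (cases "p = j")
  case True
  then show ?thesis using z by simp
next
  case False
  have z_at: "(z + c *\<^sub>R (axis p 1 - axis j 1)) $ i =
      (if i = p then z $ p + c else if i = j then z $ j - c else z $ i)" for i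
    using False by (simp add: axis_def)
  have z_i: "l i \<le> ereal (z $ i)" "ereal (z $ i) \<le> u i" for i
    using z by (auto simp: in_box_def)
  have "l p \<le> ereal (z $ p + c)"
    using order.trans[OF z_i(1)[of p], of "ereal (z $ p + c)"] c by simp
  moreover have "ereal (z $ j - c) \<le> u j"
    using order.trans[OF _ z_i(2)[of j], of "ereal (z $ j - c)"] c by simp
  ultimately show ?thesis
    using ereal_add_le_if_le_diff[OF up] ereal_le_diff_if_le_diff[OF lo] z_i
    unfolding in_box_def z_at by simp
qed

lemma in_box_slack:
  "in_box l u z \<Longrightarrow> 0 \<le> ereal (z $ i) - l i \<and> 0 \<le> u i - ereal (z $ i)"
  unfolding in_box_def by (blast intro: ereal_diff_positive)

lemma alpha_bar_nonneg: "in_box l u z \<Longrightarrow> 0 \<le> alpha_bar l u z j p g"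
  unfolding alpha_bar_def by (simp add: in_box_slack zero_le_divide_ereal)

lemma in_box_step_le_alpha_bar:
  fixes z :: "real^'n::finite"
  assumes z: "in_box l u z" and t: "0 \<le> t" "ereal t \<le> alpha_bar l u z j p g"
  shows "in_box l u (z + t *\<^sub>R (g *\<^sub>R (axis p 1 - axis j 1)))"
proof -
  note slack = in_box_slack[OF z]
  consider "g > 0" | "g < 0" | "g = 0" by linarith
  then show ?thesis
  proof cases
    case 1
    have "ereal (t * g) \<le> min (u p - ereal (z $ p)) (ereal (z $ j) - l j)"
      using t 1 slack by (intro ereal_mult_le_if_le_divide) (auto simp: alpha_bar_def)
    then show ?thesis
      using in_box_transfer[OF z, of "t * g"] t 1 by simp
  next
    case 2
    have "ereal (t * \<bar>g\<bar>) \<le> min (ereal (z $ p) - l p) (u j - ereal (z $ j))"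
      using t 2 slack by (intro ereal_mult_le_if_le_divide) (auto simp: alpha_bar_def)
    then have "in_box l u (z + (t * \<bar>g\<bar>) *\<^sub>R (axis j 1 - axis p 1))"
      using t by (intro in_box_transfer[OF z]) auto
    moreover have "t *\<^sub>R (g *\<^sub>R (axis p 1 - axis j 1)) =
        (t * \<bar>g\<bar>) *\<^sub>R (axis j 1 - axis p 1 :: real^'n)"
      using 2 by (simp add: algebra_simps)
    ultimately show ?thesis by (simp only:)
  next
    case 3
    then show ?thesis using z by simp
  qed
qed

lemma inner_step_in_box:
  assumes step: "inner_step f G l u \<gamma> \<delta> A_l A_u j p z z'" and z: "in_box l u z"
    and par: "0 \<le> \<delta>" "\<delta> \<le> 1" "0 \<le> A_l"
  shows "in_box l u z'"
proof -
  define g where "g = G z $ j - G z $ p"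
  define M where "M A = min (alpha_bar l u z j p g) (ereal A)" for A
  obtain A \<Delta> m where A: "A_l \<le> A" and \<Delta>: "\<Delta> = real_of_ereal (M A)"
    and z': "z' = z + (\<delta> ^ m * \<Delta>) *\<^sub>R (g *\<^sub>R (axis p 1 - axis j 1))"
    using step unfolding inner_step_def Let_def g_def M_def by blast
  have "0 \<le> M A" "M A \<le> ereal A"
    using alpha_bar_nonneg[OF z] A par by (auto simp: M_def)
  then have \<Delta>_eq: "ereal \<Delta> = M A" and "0 \<le> \<Delta>"
    unfolding \<Delta> by (cases "M A"; simp)+
  moreover have "\<delta> ^ m \<le> 1" using par by (simp add: power_le_one)
  ultimately have t: "0 \<le> \<delta> ^ m * \<Delta>" "\<delta> ^ m * \<Delta> \<le> \<Delta>"
    using par by (simp_all add: mult_left_le_one_le)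
  have "ereal (\<delta> ^ m * \<Delta>) \<le> ereal \<Delta>" using t(2) by simp
  also have "\<dots> \<le> alpha_bar l u z j p g" using \<Delta>_eq by (simp add: M_def)
  finally show ?thesis
    unfolding z' using t(1) by (intro in_box_step_le_alpha_bar[OF z])
qed

lemma AC2CD_seq_in_box:
  fixes x :: "nat \<Rightarrow> real^'n::finite"
  assumes alg: "AC2CD_seq f G l u \<tau> \<gamma> \<delta> A_l A_u x" and x0: "in_box l u (x 0)"
    and par: "0 \<le> \<delta>" "\<delta> \<le> 1" "0 \<le> A_l"
  shows "in_box l u (x k)"
proof (induction k)
  case 0
  show ?case using x0 .
next
  case (Suc k)
  obtain j p z where z1: "z 1 = x k" and zn: "z (CARD('n) + 1) = x (Suc k)"
    and steps: "\<forall>i\<in>{1..CARD('n)}. inner_step f G l u \<gamma> \<delta> A_l A_u j (p i) (z i) (z (Suc i))"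
    using alg unfolding AC2CD_seq_def by blast
  have "in_box l u (z (CARD('n) + 1))"
  proof (rule dec_induct[where P = "\<lambda>i. in_box l u (z i)"])
    show "in_box l u (z 1)" using Suc.IH z1 by simp
  next
    fix i assume "1 \<le> i" "i < CARD('n) + 1" and z_i: "in_box l u (z i)"
    then have "inner_step f G l u \<gamma> \<delta> A_l A_u j (p i) (z i) (z (Suc i))"
      using steps by simp
    then show "in_box l u (z (Suc i))" using z_i par by (rule inner_step_in_box)
  qed simp
  then show ?case using zn by simp
qed

lemma in_box_limit:
  assumes box: "\<And>k. in_box l u (x k)" and lim: "x \<longlonglongrightarrow> xstar"
  shows "in_box l u xstar"
  unfolding in_box_def
proof
  fix i
  have "(\<lambda>k. ereal (x k $ i)) \<longlonglongrightarrow> ereal (xstar $ i)"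
    using lim by (simp add: lim_ereal tendsto_vec_nth)
  moreover have "l i \<le> ereal (x k $ i)" "ereal (x k $ i) \<le> u i" for k
    using box by (auto simp: in_box_def)
  ultimately show "l i \<le> ereal (xstar $ i) \<and> ereal (xstar $ i) \<le> u i"
    by (blast intro: LIMSEQ_le_const LIMSEQ_le_const2)
qed

lemma Dist_pos: "l h < ereal (x $ h) \<Longrightarrow> ereal (x $ h) < u h \<Longrightarrow> 0 < Dist l u x h"
  unfolding Dist_def by (cases "l h"; cases "u h") auto

lemma strictly_in_bounds_if_dist_less_Dist:
  assumes "ereal \<bar>y $ h - x $ h\<bar> < Dist l u x h"
  shows "l h < ereal (y $ h) \<and> ereal (y $ h) < u h"
  using assms unfolding Dist_def by (cases "l h"; cases "u h") auto

lemma abs_nth_le_linf: "\<bar>x $ i\<bar> \<le> linf x"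
  unfolding linf_def by (simp add: Max_ge_iff)

lemma linf_le_norm: "linf x \<le> norm x"
  unfolding linf_def by (simp add: component_le_norm_cart)

lemma LIMSEQ_imp_eventually_linf_less:
  fixes e :: ereal
  assumes lim: "x \<longlonglongrightarrow> xstar" and e: "0 < e"
  shows "\<exists>N. \<forall>k>N. ereal (linf (x k - xstar)) < e"
proof (cases e)
  case (real r)
  with e have "0 < r" by simp
  with lim obtain N where N: "\<forall>k\<ge>N. norm (x k - xstar) < r" by (blast dest: LIMSEQ_D)
  have "linf (x k - xstar) < r" if "k > N" for k
  proof -
    have "norm (x k - xstar) < r" using N that by simp
    then show ?thesis by (rule le_less_trans[OF linf_le_norm])
  qed
  then show ?thesis using real by auto
qed (use e in auto)

theorem theorem4:
  fixes f :: "real^'n::finite \<Rightarrow> real" and G :: "real^'n \<Rightarrow> real^'n"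
    and l u :: "'n \<Rightarrow> ereal" and b \<tau> \<gamma> \<delta> A_l A_u :: real
    and x :: "nat \<Rightarrow> real^'n" and xstar :: "real^'n"
  assumes n2: "CARD('n) \<ge> 2"
    and l_fin: "\<forall>i. l i \<noteq> \<infinity>" and u_fin: "\<forall>i. u i \<noteq> -\<infinity>" and lu: "\<forall>i. l i < u i"
    and grad: "\<forall>y. (f has_derivative (\<lambda>h. G y \<bullet> h)) (at y)"
    and lip: "\<exists>L. \<forall>y w. norm (G y - G w) \<le> L * norm (y - w)"
    and par: "0 < \<tau>" "\<tau> \<le> 1" "0 < \<gamma>" "\<gamma> < 1" "0 < \<delta>" "\<delta> < 1" "0 < A_l" "A_l \<le> A_u"
    and x0: "feasible l u b (x 0)"
    and L0: "{y. feasible l u b y \<and> f y \<le> f (x 0)} \<noteq> {}"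
            "compact {y. feasible l u b y \<and> f y \<le> f (x 0)}"
    and free: "\<forall>y. feasible l u b y \<and> f y \<le> f (x 0) \<longrightarrow> (\<exists>i. l i < ereal (y $ i) \<and> ereal (y $ i) < u i)"
    and alg: "AC2CD_seq f G l u \<tau> \<gamma> \<delta> A_l A_u x"
    and lim: "x \<longlonglongrightarrow> xstar"
  shows "let Act = {i. ereal (xstar $ i) = l i} \<union> {i. ereal (xstar $ i) = u i};
             Dmin = Min (Dist l u xstar ` (- Act));
             kN = (LEAST kN. \<forall>k>kN. ereal (linf (x k - xstar)) < Dmin)
         in \<forall>k>kN. \<forall>h. h \<notin> Act \<longrightarrow> l h < ereal (x k $ h) \<and> ereal (x k $ h) < u h"
proof -
  define Act where "Act = {i. ereal (xstar $ i) = l i} \<union> {i. ereal (xstar $ i) = u i}"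
  define Dmin where "Dmin = Min (Dist l u xstar ` (- Act))"
  define kN where "kN = (LEAST kN. \<forall>k>kN. ereal (linf (x k - xstar)) < Dmin)"
  have "in_box l u (x k)" for k
    using AC2CD_seq_in_box[OF alg feasible_imp_in_box[OF x0]] par by simp
  then have "in_box l u xstar" using lim by (rule in_box_limit)
  then have Dist_free: "0 < Dist l u xstar h" if "h \<notin> Act" for h
    using that by (intro Dist_pos) (auto simp: in_box_def Act_def order.order_iff_strict)
  have "\<forall>k>kN. \<forall>h. h \<notin> Act \<longrightarrow> l h < ereal (x k $ h) \<and> ereal (x k $ h) < u h"
  proof (intro allI impI)
    fix k h assume k: "k > kN" and h: "h \<notin> Act"
    have "0 < Dmin" unfolding Dmin_def using h Dist_free by (subst Min_gr_iff) auto
    then have "\<forall>k>kN. ereal (linf (x k - xstar)) < Dmin"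
      unfolding kN_def by (rule LeastI_ex[OF LIMSEQ_imp_eventually_linf_less[OF lim]])
    moreover have "Dmin \<le> Dist l u xstar h" unfolding Dmin_def using h by simp
    ultimately have "ereal \<bar>x k $ h - xstar $ h\<bar> < Dist l u xstar h"
      using k abs_nth_le_linf[of "x k - xstar" h]
      by (metis ereal_less_eq(3) order_le_less_trans order_less_le_trans vector_minus_component)
    then show "l h < ereal (x k $ h) \<and> ereal (x k $ h) < u h"
      by (rule strictly_in_bounds_if_dist_less_Dist)
  qed
  then show ?thesis unfolding Let_def Act_def Dmin_def kN_def .
qed

end
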